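(* With three agents, items $\mathcal{M}=\{(j,k): j\in\{1,2,3\},k\in\{1,2,3,4\}\}$ and the matrices $$B=\begin{pmatrix}1&1&1&1\\1&1&1&1\\1&1&1&1\end{pmatrix},\ O=\begin{pmatrix}17&25&12&1\\2&22&3&28\\11&0&21&23\end{pmatrix},\ E^1=\begin{pmatrix}-3&1&1&1\\0&0&0&0\\0&0&0&0\end{pmatrix},$$ $$E^2=\begin{pmatrix}-3&1&0&0\\1&0&0&0\\1&0&0&0\end{pmatrix},\ E^3=\begin{pmatrix}-3&0&1&0\\0&0&1&0\\0&0&0&1\end{pmatrix},$$ define additive utilities $u_i((j,k))=10^6B_{jk}+10^3O_{jk}+E^i_{jk}$ and $w_i((j,k))=10^6B_{jk}+10^3O_{jk}-E^i_{jk}$ for $i\in[3]$. Let $I=(\mathcal{M},[3],(u_i))$ and $J=(\mathcal{M},[3],(w_i))$. Then: there is an MmS allocation for $I$ but no MmS allocation for $-I=(\mathcal{M},[3],(-u_i))$; and there is no MmS allocation for $J$ but there is an MmS allocation for $-J=(\mathcal{M},[3],(-w_i))$.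
   Context: $\Pi_N(\mathcal{M})$ is the set of ordered $N$-partitions of $\mathcal{M}$ (parts may be empty). For an additive function $v$, $MmS_{v}^N(\mathcal{M}):=\max_{(S_1,\ldots,S_N)\in\Pi_N(\mathcal{M})}\min_{j} v(S_j)$. An MmS allocation for an instance $(\mathcal{M},[N],(v_i))$ is an allocation $(S_1,\dots,S_N)\in\Pi_N(\mathcal{M})$ with $v_i(S_i)\ge MmS_{v_i}^N(\mathcal{M})$ for all $i$. *)

theory Defs
  imports Main
begin

definition ordered_partitions :: "'a set \<Rightarrow> nat \<Rightarrow> (nat \<Rightarrow> 'a set) set" where
  "ordered_partitions M N =
     {S. (\<forall>j. j \<notin> {1..N} \<longrightarrow> S j = {}) \<and>
         (\<Union>j\<in>{1..N}. S j) = M \<and>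
         (\<forall>i\<in>{1..N}. \<forall>j\<in>{1..N}. i \<noteq> j \<longrightarrow> S i \<inter> S j = {})}"

definition MmS :: "('a \<Rightarrow> int) \<Rightarrow> nat \<Rightarrow> 'a set \<Rightarrow> int" where
  "MmS v N M = Max ((\<lambda>S. Min ((\<lambda>j. sum v (S j)) ` {1..N})) ` ordered_partitions M N)"

definition MmS_allocation :: "'a set \<Rightarrow> nat \<Rightarrow> (nat \<Rightarrow> 'a \<Rightarrow> int) \<Rightarrow> (nat \<Rightarrow> 'a set) \<Rightarrow> bool" where
  "MmS_allocation M N v S \<longleftrightarrow>
     S \<in> ordered_partitions M N \<and> (\<forall>i\<in>{1..N}. sum (v i) (S i) \<ge> MmS (v i) N M)"

definition items :: "(nat \<times> nat) set" where
  "items = {1..3} \<times> {1..4}"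

definition Bmat :: "int list list" where
  "Bmat = [[1,1,1,1],[1,1,1,1],[1,1,1,1]]"

definition Omat :: "int list list" where
  "Omat = [[17,25,12,1],[2,22,3,28],[11,0,21,23]]"

definition Emats :: "int list list list" where
  "Emats = [ [[-3,1,1,1],[0,0,0,0],[0,0,0,0]],
             [[-3,1,0,0],[1,0,0,0],[1,0,0,0]],
             [[-3,0,1,0],[0,0,1,0],[0,0,0,1]] ]"

definition entry :: "int list list \<Rightarrow> nat \<Rightarrow> nat \<Rightarrow> int" where
  "entry A j k = A ! (j - 1) ! (k - 1)"

definition u :: "nat \<Rightarrow> nat \<times> nat \<Rightarrow> int" where
  "u i x = (case x of (j, k) \<Rightarrow>
     10^6 * entry Bmat j k + 10^3 * entry Omat j k + entry (Emats ! (i - 1)) j k)"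

definition w :: "nat \<Rightarrow> nat \<times> nat \<Rightarrow> int" where
  "w i x = (case x of (j, k) \<Rightarrow>
     10^6 * entry Bmat j k + 10^3 * entry Omat j k - entry (Emats ! (i - 1)) j k)"

end

theory Submission
  imports Defs "HOL-Library.FuncSet"
begin

text \<open>The twelve item values add up to 12165000 under every valuation, and every agent can
split the items into three bundles worth exactly 4055000 to it, so all four maximin shares are
\<open>\<pm>\<close>4055000. Writing \<open>u\<^sub>i = 1000 c + E\<^sup>i\<close> and \<open>w\<^sub>i = 1000 c - E\<^sup>i\<close> with the coarse value
\<open>c = 1000 B + O\<close>, the perturbations are too small (at most 6 in absolute value on any bundle) to
move a bundle past a multiple of 1000. Hence an allocation meeting all shares of \<open>-I\<close>, or of \<open>J\<close>,
gives every agent a bundle of coarse value exactly 4055 on which its own perturbation is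
nonpositive. A subset-sum enumeration shows there are only nine bundles of coarse value 4055,
and none of their disjoint triples is acceptable to the three agents in turn. For \<open>I\<close> and \<open>-J\<close>,
handing out the three rows works.\<close>

lemma
  assumes "S \<in> ordered_partitions M N"
  shows ordered_partitions_UN: "(\<Union>j\<in>{1..N}. S j) = M"
    and ordered_partitions_disjoint: "\<forall>i\<in>{1..N}. \<forall>j\<in>{1..N}. i \<noteq> j \<longrightarrow> S i \<inter> S j = {}"
    and ordered_partitions_outside: "j \<notin> {1..N} \<Longrightarrow> S j = {}"
  using assms unfolding ordered_partitions_def by auto

lemma ordered_partitions_part_subset:
  assumes "S \<in> ordered_partitions M N" "j \<in> {1..N}"
  shows "S j \<subseteq> M"
  using UN_upper[OF assms(2), of S] by (simp only: ordered_partitions_UN[OF assms(1)])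

lemma sum_ordered_partition:
  assumes "finite M" "S \<in> ordered_partitions M N"
  shows "sum v M = (\<Sum>j=1..N. sum v (S j))"
proof -
  have "sum v M = sum v (\<Union>j\<in>{1..N}. S j)"
    by (simp only: ordered_partitions_UN[OF assms(2)])
  also have "\<dots> = (\<Sum>j=1..N. sum v (S j))"
  proof (rule sum.UNION_disjoint)
    show "\<forall>j\<in>{1..N}. finite (S j)"
      using assms ordered_partitions_part_subset finite_subset by metis
  qed (simp_all add: ordered_partitions_disjoint[OF assms(2)])
  finally show ?thesis .
qed

lemma finite_ordered_partitions:
  assumes "finite M"
  shows "finite (ordered_partitions M N)"
proof (rule finite_imageD)
  show "inj_on (\<lambda>S. restrict S {1..N}) (ordered_partitions M N)"
  proof (rule inj_onI)
    fix S T assume S: "S \<in> ordered_partitions M N" and T: "T \<in> ordered_partitions M N"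
      and eq: "restrict S {1..N} = restrict T {1..N}"
    show "S = T"
    proof
      fix j show "S j = T j"
        using eq ordered_partitions_outside[OF S] ordered_partitions_outside[OF T]
        by (cases "j \<in> {1..N}") (metis restrict_apply', simp)
    qed
  qed
  have "(\<lambda>S. restrict S {1..N}) ` ordered_partitions M N \<subseteq> Pi\<^sub>E {1..N} (\<lambda>_. Pow M)"
  proof (rule image_subsetI)
    fix S assume "S \<in> ordered_partitions M N"
    then have "\<forall>j\<in>{1..N}. S j \<in> Pow M"
      using ordered_partitions_part_subset by blast
    then show "restrict S {1..N} \<in> Pi\<^sub>E {1..N} (\<lambda>_. Pow M)"
      by (simp only: restrict_PiE_iff)
  qed
  then show "finite ((\<lambda>S. restrict S {1..N}) ` ordered_partitions M N)"
    by (rule finite_subset) (simp add: assms finite_PiE)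
qed

lemma MmS_eq_if_equal_parts:
  assumes "finite M" "N > 0" "P \<in> ordered_partitions M N" "\<forall>j\<in>{1..N}. sum v (P j) = t"
  shows "MmS v N M = t"
  unfolding MmS_def
proof (rule Max_eqI)
  show "finite ((\<lambda>S. Min ((\<lambda>j. sum v (S j)) ` {1..N})) ` ordered_partitions M N)"
    using finite_ordered_partitions[OF assms(1)] by (rule finite_imageI)
next
  fix y assume "y \<in> (\<lambda>S. Min ((\<lambda>j. sum v (S j)) ` {1..N})) ` ordered_partitions M N"
  then obtain S where S: "S \<in> ordered_partitions M N"
    and y: "y = Min ((\<lambda>j. sum v (S j)) ` {1..N})"
    by blast
  have "of_nat N * y = (\<Sum>j=1..N. y)" by simp
  also have "\<dots> \<le> (\<Sum>j=1..N. sum v (S j))"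
    unfolding y by (rule sum_mono) simp
  also have "\<dots> = (\<Sum>j=1..N. sum v (P j))"
    by (simp only: sum_ordered_partition[OF assms(1) S, symmetric] sum_ordered_partition[OF assms(1,3), symmetric])
  also have "\<dots> = of_nat N * t"
    using assms(4) by simp
  finally show "y \<le> t"
    using assms(2) by (simp add: mult_le_cancel_left_pos)
next
  have "(\<lambda>j. sum v (P j)) ` {1..N} = {t}"
    using assms(2,4) by (auto simp: image_constant_conv)
  then show "t \<in> (\<lambda>S. Min ((\<lambda>j. sum v (S j)) ` {1..N})) ` ordered_partitions M N"
    using assms(3) by (intro rev_image_eqI[of P]) simp_all
qed

lemma disjoint_nth_if_distinct_concat:
  assumes "distinct (concat xss)" "i < length xss" "j < length xss" "i \<noteq> j"
  shows "set (xss ! i) \<inter> set (xss ! j) = {}"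
  using assms
proof (induction xss arbitrary: i j)
  case (Cons xs xss)
  have "set xs \<inter> set (xss ! k) = {}" if "k < length xss" for k
    using Cons.prems(1) nth_mem[OF that] by auto
  then show ?case
    using Cons by (cases i; cases j) auto
qed simp

definition list_allocation :: "'a list list \<Rightarrow> nat \<Rightarrow> 'a set" where
  "list_allocation xss j = (if j \<in> {1..length xss} then set (xss ! (j - 1)) else {})"

lemma list_allocation_mem_set:
  "j \<in> {1..length xss} \<Longrightarrow> list_allocation xss j \<in> set ` set xss"
  unfolding list_allocation_def by (auto intro!: nth_mem)

lemma list_allocation_mem_ordered_partitions:
  assumes "distinct (concat xss)"
  shows "list_allocation xss \<in> ordered_partitions (set (concat xss)) (length xss)"
  unfolding ordered_partitions_def mem_Collect_eq
proof (intro conjI ballI impI allI)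
  show "list_allocation xss j = {}" if "j \<notin> {1..length xss}" for j
    using that by (auto simp: list_allocation_def)
  have "(\<Union>j\<in>{1..length xss}. list_allocation xss j) = (\<Union>i<length xss. list_allocation xss (Suc i))"
    unfolding image_Suc_lessThan[symmetric] image_image ..
  also have "\<dots> = (\<Union>i<length xss. set (xss ! i))"
    by (simp add: list_allocation_def)
  also have "\<dots> = set (concat xss)"
  proof -
    have "set xss = (\<lambda>i. xss ! i) ` {..<length xss}"
      by (auto simp: in_set_conv_nth)
    then show ?thesis by (simp add: image_image)
  qed
  finally show "(\<Union>j\<in>{1..length xss}. list_allocation xss j) = set (concat xss)" .
  fix i j assume "i \<in> {1..length xss}" "j \<in> {1..length xss}" "i \<noteq> j"
  moreover from this have "set (xss ! (i - 1)) \<inter> set (xss ! (j - 1)) = {}"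
    by (intro disjoint_nth_if_distinct_concat[OF assms]) auto
  ultimately show "list_allocation xss i \<inter> list_allocation xss j = {}"
    by (simp add: list_allocation_def)
qed

lemma le_if_scaled_le:
  fixes K c e t :: int
  assumes "K * c + e \<le> K * t" "\<bar>e\<bar> < K"
  shows "c \<le> t"
proof (rule ccontr)
  assume "\<not> c \<le> t"
  then have "K * (t + 1) \<le> K * c" using assms(2) by (intro mult_left_mono) auto
  then show False using assms by (simp add: algebra_simps)
qed

fun subsets_with_sum :: "('a \<Rightarrow> int) \<Rightarrow> 'a list \<Rightarrow> int \<Rightarrow> 'a list list" where
  "subsets_with_sum c [] t = (if t = 0 then [[]] else [])"
| "subsets_with_sum c (x # xs) t =
     (if t < 0 then []
      else map ((#) x) (subsets_with_sum c xs (t - c x)) @ subsets_with_sum c xs t)"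

lemma subsets_with_sum_complete:
  assumes "distinct xs" "\<forall>x\<in>set xs. c x \<ge> 0" "S \<subseteq> set xs" "sum c S = t"
  shows "\<exists>ys\<in>set (subsets_with_sum c xs t). set ys = S"
  using assms
proof (induction xs arbitrary: S t)
  case Nil
  then show ?case by auto
next
  case (Cons x xs)
  have "t \<ge> 0"
    using Cons.prems(2-4) by (metis sum_nonneg subsetD)
  show ?case
  proof (cases "x \<in> S")
    case True
    have "S - {x} \<subseteq> set xs" "sum c (S - {x}) = t - c x"
      using Cons.prems(1,3,4) True by (auto simp: sum_diff1 finite_subset)
    then obtain ys where "ys \<in> set (subsets_with_sum c xs (t - c x))" "set ys = S - {x}"
      using Cons.IH[of "S - {x}" "t - c x"] Cons.prems(1,2) by auto
    then show ?thesis
      using True \<open>t \<ge> 0\<close> by (intro bexI[of _ "x # ys"]) auto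
  next
    case False
    then have "S \<subseteq> set xs" using Cons.prems(3) by auto
    then obtain ys where "ys \<in> set (subsets_with_sum c xs t)" "set ys = S"
      using Cons.IH[of S t] Cons.prems(1,2,4) by auto
    then show ?thesis using \<open>t \<ge> 0\<close> by auto
  qed
qed

definition coarse :: "nat \<times> nat \<Rightarrow> int" where
  "coarse x = (case x of (j, k) \<Rightarrow> 1000 * entry Bmat j k + entry Omat j k)"

definition perturbation :: "nat \<Rightarrow> nat \<times> nat \<Rightarrow> int" where
  "perturbation i x = (case x of (j, k) \<Rightarrow> entry (Emats ! (i - 1)) j k)"

lemma sum_u_eq: "sum (u i) S = 1000 * sum coarse S + sum (perturbation i) S"
proof -
  have "u i = (\<lambda>x. 1000 * coarse x + perturbation i x)"
    by (auto simp: u_def coarse_def perturbation_def)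
  then show ?thesis by (simp add: sum.distrib sum_distrib_left)
qed

lemma sum_w_eq: "sum (w i) S = 1000 * sum coarse S - sum (perturbation i) S"
proof -
  have "w i = (\<lambda>x. 1000 * coarse x - perturbation i x)"
    by (auto simp: w_def coarse_def perturbation_def)
  then show ?thesis by (simp add: sum_subtractf sum_distrib_left)
qed

definition item_list :: "(nat \<times> nat) list" where
  "item_list = [(1,1),(1,2),(1,3),(1,4),(2,1),(2,2),(2,3),(2,4),(3,1),(3,2),(3,3),(3,4)]"

lemma agents_eq: "{1..3::nat} = {1,2,3}"
  by auto

lemma set_item_list: "set item_list = items"
proof -
  have "{1..4::nat} = {1,2,3,4}" by auto
  with agents_eq show ?thesis by (auto simp: items_def item_list_def)
qed

lemma sum_coarse_items: "sum coarse items = 12165"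
  unfolding set_item_list[symmetric] item_list_def
  by (simp add: coarse_def entry_def Bmat_def Omat_def)

lemma abs_sum_perturbation_le:
  assumes "S \<subseteq> items" "i \<in> {1,2,3}"
  shows "\<bar>sum (perturbation i) S\<bar> \<le> 6"
proof -
  have "\<bar>sum (perturbation i) S\<bar> \<le> sum (\<lambda>x. \<bar>perturbation i x\<bar>) S"
    by (rule sum_abs)
  also have "\<dots> \<le> sum (\<lambda>x. \<bar>perturbation i x\<bar>) items"
    using assms(1) by (intro sum_mono2) (auto simp: set_item_list[symmetric])
  also have "\<dots> = 6"
    using assms(2) unfolding set_item_list[symmetric] item_list_def
    by (auto simp: perturbation_def entry_def Emats_def)
  finally show ?thesis .
qed

text \<open>The bundles of coarse value 4055, a third of the total; the \<open>i\<close>-th partition is the one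
  witnessing agent \<open>i\<close>'s maximin share.\<close>

definition tight_partitions :: "(nat \<times> nat) list list list" where
  "tight_partitions =
     [[[(1,1),(1,2),(1,3),(1,4)], [(2,1),(2,2),(2,3),(2,4)], [(3,1),(3,2),(3,3),(3,4)]],
      [[(1,1),(1,2),(2,1),(3,1)], [(1,3),(2,2),(3,2),(3,3)], [(1,4),(2,3),(2,4),(3,4)]],
      [[(1,1),(1,3),(2,3),(3,4)], [(1,2),(2,1),(2,4),(3,2)], [(1,4),(2,2),(3,1),(3,3)]]]"

lemma tight_bundle_if_sum_coarse_eq:
  assumes "S \<subseteq> items" "sum coarse S = 4055"
  shows "S \<in> set ` set (concat tight_partitions)"
proof -
  have "\<forall>x\<in>set item_list. coarse x \<ge> 0" "distinct item_list"
    by (simp_all add: item_list_def coarse_def entry_def Bmat_def Omat_def)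
  then obtain ys where ys: "ys \<in> set (subsets_with_sum coarse item_list 4055)" "set ys = S"
    using subsets_with_sum_complete assms set_item_list by metis
  have "set (subsets_with_sum coarse item_list 4055) = set (concat tight_partitions)"
    by (simp add: item_list_def coarse_def entry_def Bmat_def Omat_def tight_partitions_def insert_commute)
  with ys show ?thesis by blast
qed

lemma tight_partitions_partition_items:
  "\<forall>P\<in>set tight_partitions. distinct (concat P) \<and> length P = 3 \<and> set (concat P) = items"
  unfolding set_item_list[symmetric]
  by (simp add: tight_partitions_def item_list_def insert_commute)

lemma tight_partition_bundle_values:
  assumes "i \<in> {1,2,3}"
  shows "\<forall>xs\<in>set (tight_partitions ! (i - 1)). sum coarse (set xs) = 4055 \<and> sum (perturbation i) (set xs) = 0"
  using assms
  by (elim insertE; simp add: tight_partitions_def coarse_def perturbation_def entry_def Bmat_def Omat_def Emats_def)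

lemma MmS_values:
  assumes "i \<in> {1,2,3}"
  shows "MmS (u i) 3 items = 4055000" "MmS (\<lambda>x. - u i x) 3 items = - 4055000"
    "MmS (w i) 3 items = 4055000" "MmS (\<lambda>x. - w i x) 3 items = - 4055000"
proof -
  let ?P = "tight_partitions ! (i - 1)"
  have "?P \<in> set tight_partitions"
    using assms by (auto simp: tight_partitions_def)
  then have P: "list_allocation ?P \<in> ordered_partitions items 3"
    using tight_partitions_partition_items list_allocation_mem_ordered_partitions by metis
  have parts: "sum (u i) (list_allocation ?P j) = 4055000 \<and> sum (w i) (list_allocation ?P j) = 4055000"
    if "j \<in> {1..3}" for j
  proof -
    have "list_allocation ?P j \<in> set ` set ?P"
      using list_allocation_mem_set tight_partitions_partition_items \<open>?P \<in> _\<close> that by metis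
    then show ?thesis
      using tight_partition_bundle_values[OF assms] by (auto simp: sum_u_eq sum_w_eq)
  qed
  have "finite items" "(3::nat) > 0"
    by (simp_all add: set_item_list[symmetric])
  note MmS_eq = MmS_eq_if_equal_parts[OF this P]
  show "MmS (u i) 3 items = 4055000" "MmS (w i) 3 items = 4055000"
    using parts by (auto intro: MmS_eq)
  show "MmS (\<lambda>x. - u i x) 3 items = - 4055000" "MmS (\<lambda>x. - w i x) 3 items = - 4055000"
    using parts by (auto intro: MmS_eq simp: sum_negf)
qed

definition acceptable_bundles :: "nat \<Rightarrow> (nat \<times> nat) list list" where
  "acceptable_bundles i = filter (\<lambda>xs. sum (perturbation i) (set xs) \<le> 0) (concat tight_partitions)"

text \<open>Each agent accepts only the three tight bundles containing item (1,1) and the two other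
  bundles of its own tight partition. At most one agent gets item (1,1), and bundles avoiding it
  from two different tight partitions always meet.\<close>

lemma acceptable_bundles_intersect:
  assumes "xs \<in> set (acceptable_bundles 1)" "ys \<in> set (acceptable_bundles 2)" "zs \<in> set (acceptable_bundles 3)"
  shows "set xs \<inter> set ys \<noteq> {} \<or> set xs \<inter> set zs \<noteq> {} \<or> set ys \<inter> set zs \<noteq> {}"
proof -
  have "acceptable_bundles 1 = [[(1,1),(1,2),(1,3),(1,4)], [(2,1),(2,2),(2,3),(2,4)], [(3,1),(3,2),(3,3),(3,4)],
                                 [(1,1),(1,2),(2,1),(3,1)], [(1,1),(1,3),(2,3),(3,4)]]"
       "acceptable_bundles 2 = [[(1,1),(1,2),(1,3),(1,4)], [(1,1),(1,2),(2,1),(3,1)], [(1,3),(2,2),(3,2),(3,3)],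
                                 [(1,4),(2,3),(2,4),(3,4)], [(1,1),(1,3),(2,3),(3,4)]]"
       "acceptable_bundles 3 = [[(1,1),(1,2),(1,3),(1,4)], [(1,1),(1,2),(2,1),(3,1)], [(1,1),(1,3),(2,3),(3,4)],
                                 [(1,2),(2,1),(2,4),(3,2)], [(1,4),(2,2),(3,1),(3,3)]]"
    by (simp_all add: acceptable_bundles_def tight_partitions_def perturbation_def entry_def Emats_def)
  with assms show ?thesis
    by (simp only: set_simps) (elim insertE emptyE; simp)
qed

lemma ordered_partition_items_part_subset:
  "S \<in> ordered_partitions items 3 \<Longrightarrow> i \<in> {1,2,3} \<Longrightarrow> S i \<subseteq> items"
  by (rule ordered_partitions_part_subset) auto

lemma no_tight_acceptable_allocation:
  assumes S: "S \<in> ordered_partitions items 3"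
    and tight: "\<And>i. i \<in> {1,2,3} \<Longrightarrow> sum coarse (S i) = 4055 \<and> sum (perturbation i) (S i) \<le> 0"
  shows False
proof -
  have "\<exists>xs\<in>set (acceptable_bundles i). S i = set xs" if i: "i \<in> {1,2,3}" for i
  proof -
    obtain xs where "xs \<in> set (concat tight_partitions)" "S i = set xs"
      using tight_bundle_if_sum_coarse_eq ordered_partition_items_part_subset[OF S i] tight[OF i]
      by blast
    then show ?thesis
      using tight[OF i] by (auto simp: acceptable_bundles_def)
  qed
  moreover have "S 1 \<inter> S 2 = {}" "S 1 \<inter> S 3 = {}" "S 2 \<inter> S 3 = {}"
    using ordered_partitions_disjoint[OF S] by (simp_all add: agents_eq)
  ultimately show False
    using acceptable_bundles_intersect by (metis insertCI)
qed

lemma sum_coarse_parts: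
  assumes "S \<in> ordered_partitions items 3"
  shows "sum coarse (S 1) + sum coarse (S 2) + sum coarse (S 3) = 12165"
  using sum_ordered_partition[OF _ assms, of coarse, unfolded agents_eq] sum_coarse_items
  by (simp add: set_item_list[symmetric])

lemma no_allocation_within_coarse_bounds:
  fixes \<sigma> :: int
  assumes S: "S \<in> ordered_partitions items 3" and \<sigma>: "\<sigma> = 1 \<or> \<sigma> = -1"
    and bound: "\<And>i. i \<in> {1,2,3} \<Longrightarrow>
      1000 * (\<sigma> * sum coarse (S i)) + sum (perturbation i) (S i) \<le> 1000 * (\<sigma> * 4055)"
  shows False
proof -
  have le: "\<sigma> * sum coarse (S i) \<le> \<sigma> * 4055" if i: "i \<in> {1,2,3}" for i
    using abs_sum_perturbation_le[OF ordered_partition_items_part_subset[OF S i] i]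
    by (intro le_if_scaled_le[OF bound[OF i]]) simp
  have "\<sigma> * sum coarse (S 1) \<le> \<sigma> * 4055" "\<sigma> * sum coarse (S 2) \<le> \<sigma> * 4055"
    "\<sigma> * sum coarse (S 3) \<le> \<sigma> * 4055"
    by (simp_all add: le)
  then have eq: "sum coarse (S i) = 4055" if "i \<in> {1,2,3}" for i
    using sum_coarse_parts[OF S] \<sigma> that by auto
  show False
  proof (rule no_tight_acceptable_allocation[OF S])
    fix i :: nat assume i: "i \<in> {1,2,3}"
    show "sum coarse (S i) = 4055 \<and> sum (perturbation i) (S i) \<le> 0"
      using eq[OF i] bound[OF i] by simp
  qed
qed

lemma no_MmS_allocation_neg_u: "\<not> (\<exists>S. MmS_allocation items 3 (\<lambda>i x. - u i x) S)"
proof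
  assume "\<exists>S. MmS_allocation items 3 (\<lambda>i x. - u i x) S"
  then obtain S where S: "S \<in> ordered_partitions items 3"
    and share: "\<And>i. i \<in> {1,2,3} \<Longrightarrow> sum (\<lambda>x. - u i x) (S i) \<ge> MmS (\<lambda>x. - u i x) 3 items"
    unfolding MmS_allocation_def agents_eq by blast
  show False
  proof (rule no_allocation_within_coarse_bounds[OF S, of 1])
    fix i :: nat assume i: "i \<in> {1,2,3}"
    show "1000 * (1 * sum coarse (S i)) + sum (perturbation i) (S i) \<le> 1000 * (1 * 4055)"
      using share[OF i] MmS_values(2)[OF i] by (simp add: sum_negf sum_u_eq)
  qed simp
qed

lemma no_MmS_allocation_w: "\<not> (\<exists>S. MmS_allocation items 3 w S)"
proof
  assume "\<exists>S. MmS_allocation items 3 w S"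
  then obtain S where S: "S \<in> ordered_partitions items 3"
    and share: "\<And>i. i \<in> {1,2,3} \<Longrightarrow> sum (w i) (S i) \<ge> MmS (w i) 3 items"
    unfolding MmS_allocation_def agents_eq by blast
  show False
  proof (rule no_allocation_within_coarse_bounds[OF S, of "-1"])
    fix i :: nat assume i: "i \<in> {1,2,3}"
    show "1000 * (- 1 * sum coarse (S i)) + sum (perturbation i) (S i) \<le> 1000 * (- 1 * 4055)"
      using share[OF i] MmS_values(3)[OF i] by (simp add: sum_w_eq)
  qed simp
qed

lemma row_allocation_values:
  assumes "i \<in> {1,2,3}"
  shows "sum coarse (list_allocation (hd tight_partitions) i) = 4055"
    "sum (perturbation i) (list_allocation (hd tight_partitions) i) \<ge> 0"
  using assms
  by (elim insertE; simp add: list_allocation_def tight_partitions_def coarse_def perturbation_def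
      entry_def Bmat_def Omat_def Emats_def)+

lemma row_allocation_mem_ordered_partitions:
  "list_allocation (hd tight_partitions) \<in> ordered_partitions items 3"
  using tight_partitions_partition_items list_allocation_mem_ordered_partitions
  by (metis list.set_sel(1) list.distinct(1) tight_partitions_def)

lemma MmS_allocation_u_rows: "MmS_allocation items 3 u (list_allocation (hd tight_partitions))"
  unfolding MmS_allocation_def agents_eq
  using row_allocation_mem_ordered_partitions row_allocation_values
  by (auto simp: sum_u_eq MmS_values)

lemma MmS_allocation_neg_w_rows:
  "MmS_allocation items 3 (\<lambda>i x. - w i x) (list_allocation (hd tight_partitions))"
  unfolding MmS_allocation_def agents_eq
  using row_allocation_mem_ordered_partitions row_allocation_values
  by (auto simp: sum_negf sum_w_eq MmS_values)

theorem proposition4: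
  shows "(\<exists>S. MmS_allocation items 3 u S)
       \<and> \<not> (\<exists>S. MmS_allocation items 3 (\<lambda>i x. - u i x) S)
       \<and> \<not> (\<exists>S. MmS_allocation items 3 w S)
       \<and> (\<exists>S. MmS_allocation items 3 (\<lambda>i x. - w i x) S)"
  using MmS_allocation_u_rows no_MmS_allocation_neg_u no_MmS_allocation_w MmS_allocation_neg_w_rows
  by blast

end
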